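(* Let $S$ be any scheduling rule, $V$ a finite set of variables, $G$ a p-goal and $G'$ a p-variant of $G$. Then: (a) if $G\xrightarrow{S,D}Q$ and $G'\xrightarrow{S,D}R$ are p-SLD derivations via $S$ with the same template $D$, then $R$ is a p-variant of $Q$; (b) if there is a p-SLD derivation $G'\xrightarrow{S,D}\cdot$ via $S$, then there is a p-SLD derivation $Dr=(G\xrightarrow{S,D}\cdot)$ via $S$ with $nvar(Dr)\cap V=\emptyset$.
   Context: A p-atom is a pair $a[p]$ of an atom $a$ and a rational priority $p$. A p-goal is a finite set of p-atoms with pairwise distinct priorities, regarded as a list ordered by increasing priority. Substitutions act on atoms and leave priorities unchanged. A clause is $h\leftarrow B$ with $h$ an atom and $B$ a p-goal. For p-goals with no common priority, $F+G=F\cup G$; $F|G$ denotes $F+G$ when all priorities of $F$ are smaller than those of $G$. A shifting $\underline{\pi}$ is a strictly increasing bijection $\mathbb{Q}\to\mathbb{Q}$ acting on priorities ($G\underline\pi$). $F$ is a p-variant of $G$ if $F=G\lambda\underline{\sigma}$ for a renaming $\lambda$ and a shifting $\underline{\sigma}$. Priority derivation step: for a p-goal $a|F$ ($a$ of least priority), clause $c=(h\leftarrow B)$, renaming $\xi$ with $var(a|F)\cap var(c\xi)=\emptyset$, idempotent relevant mgu $\theta$ of $a$ and $h\xi$, and shifting $\underline{\pi}$ with $F$, $B\xi\underline{\pi}$ sharing no priority: $a|F\xrightarrow{c\xi,\theta}(F+B\xi\underline{\pi})\theta$. A p-SLD derivation is a sequence of such steps with each renamed clause $c_j\xi_j$ variable-disjoint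 from the initial goal and all earlier renamed clauses; its template is the sequence of applied clauses and $nvar$ is the union of the sets $var(c_j\xi_j)$. Lowering: for $c=(h\leftarrow B)$, a step $a\lambda\underline{\sigma}|(K\lambda\underline{\sigma}+X)\xrightarrow{c}(X+K\lambda\underline{\sigma}+B\xi''\underline{\theta}'')\alpha''$ is a lowering by $X$ of $a|K\xrightarrow{c}(K+B\xi'\underline{\theta}')\alpha'$; a congruent lowering if some shifting $\underline{\rho}$ has $K\underline{\rho}=K\underline{\sigma}$ and $B\underline{\theta}'\underline{\rho}=B\underline{\theta}''$. Steps are (congruent) lowerings of each other if each is a (congruent) lowering of the other. A set $S$ of steps is deterministic if any two steps of $S$ that are lowerings of each other are congruent lowerings of each other; complete if (i) whenever some step $G\xrightarrow{c}\cdot$ exists, some step $G\xrightarrow{c}\cdot$ lies in $S$, and (ii) $S$ contains every step that is a congruent lowering of each other with a step of $S$. A scheduling rule is a complete deterministic set of steps; $G\xrightarrow{S,M}R$ denotes a p-SLD derivation with template $M$ all of whose steps lie in $S$. *)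

theory Defs
  imports Complex_Main
begin

datatype ('f) trm = Var nat | Fn 'f "'f trm list"

fun tsubst :: "(nat \<Rightarrow> 'f trm) \<Rightarrow> 'f trm \<Rightarrow> 'f trm" where
  "tsubst \<sigma> (Var x) = \<sigma> x"
| "tsubst \<sigma> (Fn f ts) = Fn f (map (tsubst \<sigma>) ts)"

fun tvars :: "'f trm \<Rightarrow> nat set" where
  "tvars (Var x) = {x}"
| "tvars (Fn f ts) = \<Union> (set (map tvars ts))"

datatype ('p,'f) atom = Atom 'p "'f trm list"

fun asubst :: "(nat \<Rightarrow> 'f trm) \<Rightarrow> ('p,'f) atom \<Rightarrow> ('p,'f) atom" where
  "asubst \<sigma> (Atom p ts) = Atom p (map (tsubst \<sigma>) ts)"

fun avars :: "('p,'f) atom \<Rightarrow> nat set" where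
  "avars (Atom p ts) = \<Union> (set (map tvars ts))"

type_synonym 'f subst = "nat \<Rightarrow> 'f trm"

definition scomp :: "'f subst \<Rightarrow> 'f subst \<Rightarrow> 'f subst" where
  "scomp \<sigma> \<tau> = (\<lambda>x. tsubst \<tau> (\<sigma> x))"

definition sdom :: "'f subst \<Rightarrow> nat set" where
  "sdom \<sigma> = {x. \<sigma> x \<noteq> Var x}"

definition srange_vars :: "'f subst \<Rightarrow> nat set" where
  "srange_vars \<sigma> = (\<Union>x\<in>sdom \<sigma>. tvars (\<sigma> x))"

definition renaming :: "'f subst \<Rightarrow> bool" where
  "renaming \<rho> \<longleftrightarrow> (\<exists>\<pi>. bij \<pi> \<and> finite {x. \<pi> x \<noteq> x} \<and> \<rho> = Var \<circ> \<pi>)"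

definition unifier :: "'f subst \<Rightarrow> ('p,'f) atom \<Rightarrow> ('p,'f) atom \<Rightarrow> bool" where
  "unifier \<theta> a b \<longleftrightarrow> asubst \<theta> a = asubst \<theta> b"

definition idem_rel_mgu :: "'f subst \<Rightarrow> ('p,'f) atom \<Rightarrow> ('p,'f) atom \<Rightarrow> bool" where
  "idem_rel_mgu \<theta> a b \<longleftrightarrow>
     unifier \<theta> a b
   \<and> (\<forall>\<tau>. unifier \<tau> a b \<longrightarrow> (\<exists>\<delta>. \<tau> = scomp \<theta> \<delta>))
   \<and> scomp \<theta> \<theta> = \<theta>
   \<and> sdom \<theta> \<union> srange_vars \<theta> \<subseteq> avars a \<union> avars b"

type_synonym ('p,'f) patom = "('p,'f) atom \<times> rat"
type_synonym ('p,'f) pgoal = "('p,'f) patom set"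

definition is_pgoal :: "('p,'f) pgoal \<Rightarrow> bool" where
  "is_pgoal G \<longleftrightarrow> finite G \<and> inj_on snd G"

definition prios :: "('p,'f) pgoal \<Rightarrow> rat set" where
  "prios G = snd ` G"

definition pvars :: "('p,'f) pgoal \<Rightarrow> nat set" where
  "pvars G = (\<Union>x\<in>G. avars (fst x))"

definition psubst :: "'f subst \<Rightarrow> ('p,'f) pgoal \<Rightarrow> ('p,'f) pgoal" where
  "psubst \<sigma> G = (\<lambda>(a,p). (asubst \<sigma> a, p)) ` G"

definition shifting :: "(rat \<Rightarrow> rat) \<Rightarrow> bool" where
  "shifting \<pi> \<longleftrightarrow> strict_mono \<pi> \<and> bij \<pi>"

definition pshift :: "(rat \<Rightarrow> rat) \<Rightarrow> ('p,'f) pgoal \<Rightarrow> ('p,'f) pgoal" where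
  "pshift \<pi> G = (\<lambda>(a,p). (a, \<pi> p)) ` G"

definition p_variant :: "('p,'f) pgoal \<Rightarrow> ('p,'f) pgoal \<Rightarrow> bool" where
  "p_variant F G \<longleftrightarrow> (\<exists>l \<sigma>. renaming l \<and> shifting \<sigma> \<and> F = pshift \<sigma> (psubst l G))"

definition least_patom :: "('p,'f) pgoal \<Rightarrow> ('p,'f) patom \<Rightarrow> bool" where
  "least_patom G x \<longleftrightarrow> x \<in> G \<and> (\<forall>y\<in>G. y \<noteq> x \<longrightarrow> snd x < snd y)"

definition sel :: "('p,'f) pgoal \<Rightarrow> ('p,'f) patom" where
  "sel G = (THE x. least_patom G x)"

type_synonym ('p,'f) clause = "('p,'f) atom \<times> ('p,'f) pgoal"

definition is_clause :: "('p,'f) clause \<Rightarrow> bool" where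
  "is_clause c \<longleftrightarrow> is_pgoal (snd c)"

definition cvars :: "('p,'f) clause \<Rightarrow> nat set" where
  "cvars c = avars (fst c) \<union> pvars (snd c)"

definition csubst :: "'f subst \<Rightarrow> ('p,'f) clause \<Rightarrow> ('p,'f) clause" where
  "csubst \<sigma> c = (asubst \<sigma> (fst c), psubst \<sigma> (snd c))"

text \<open>A step  a|F --(c xi, theta)--> (F + B xi pi) theta  is recorded by its source goal,
  the applied (unrenamed) clause c, the renaming xi, the mgu theta and the shifting pi.\<close>
record ('p,'f) step =
  src :: "('p,'f) pgoal"
  cls :: "('p,'f) clause"
  ren :: "'f subst"
  umgu :: "'f subst"
  shf :: "rat \<Rightarrow> rat"

definition rcl :: "('p,'f) step \<Rightarrow> ('p,'f) clause" where
  "rcl s = csubst (ren s) (cls s)"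

definition is_step :: "('p,'f) step \<Rightarrow> bool" where
  "is_step s \<longleftrightarrow>
     is_pgoal (src s) \<and> is_clause (cls s) \<and> renaming (ren s) \<and> shifting (shf s)
   \<and> (\<exists>x. least_patom (src s) x)
   \<and> pvars (src s) \<inter> cvars (rcl s) = {}
   \<and> idem_rel_mgu (umgu s) (fst (sel (src s))) (fst (rcl s))
   \<and> prios (src s - {sel (src s)}) \<inter> prios (pshift (shf s) (snd (rcl s))) = {}"

definition res :: "('p,'f) step \<Rightarrow> ('p,'f) pgoal" where
  "res s = psubst (umgu s) ((src s - {sel (src s)}) \<union> pshift (shf s) (snd (rcl s)))"

definition pat_map :: "'f subst \<Rightarrow> (rat \<Rightarrow> rat) \<Rightarrow> ('p,'f) patom \<Rightarrow> ('p,'f) patom" where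
  "pat_map l \<sigma> x = (asubst l (fst x), \<sigma> (snd x))"

text \<open>lower_data s2 s1 a K l sigma X: s1 is  a|K --c--> ..., and s2 is
  a l sigma | (K l sigma + X) --c--> ...\<close>
definition lower_data :: "('p,'f) step \<Rightarrow> ('p,'f) step \<Rightarrow> ('p,'f) patom \<Rightarrow> ('p,'f) pgoal
    \<Rightarrow> 'f subst \<Rightarrow> (rat \<Rightarrow> rat) \<Rightarrow> ('p,'f) pgoal \<Rightarrow> bool" where
  "lower_data s2 s1 a K l \<sigma> X \<longleftrightarrow>
     is_step s1 \<and> is_step s2 \<and> renaming l \<and> shifting \<sigma> \<and> cls s2 = cls s1
   \<and> src s1 = insert a K \<and> (\<forall>y\<in>K. snd a < snd y)
   \<and> src s2 = insert (pat_map l \<sigma> a) (pshift \<sigma> (psubst l K) \<union> X)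
   \<and> (\<forall>y\<in>pshift \<sigma> (psubst l K) \<union> X. snd (pat_map l \<sigma> a) < snd y)
   \<and> prios (pshift \<sigma> (psubst l K)) \<inter> prios X = {}"

definition lowering :: "('p,'f) step \<Rightarrow> ('p,'f) step \<Rightarrow> bool" where
  "lowering s2 s1 \<longleftrightarrow> (\<exists>a K l \<sigma> X. lower_data s2 s1 a K l \<sigma> X)"

definition cong_lowering :: "('p,'f) step \<Rightarrow> ('p,'f) step \<Rightarrow> bool" where
  "cong_lowering s2 s1 \<longleftrightarrow> (\<exists>a K l \<sigma> X \<rho>. lower_data s2 s1 a K l \<sigma> X \<and> shifting \<rho>
      \<and> pshift \<rho> K = pshift \<sigma> K
      \<and> pshift \<rho> (pshift (shf s1) (snd (cls s1))) = pshift (shf s2) (snd (cls s1)))"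

definition deterministic :: "('p,'f) step set \<Rightarrow> bool" where
  "deterministic S \<longleftrightarrow> (\<forall>s1\<in>S. \<forall>s2\<in>S. lowering s1 s2 \<and> lowering s2 s1
      \<longrightarrow> cong_lowering s1 s2 \<and> cong_lowering s2 s1)"

definition complete :: "('p,'f) step set \<Rightarrow> bool" where
  "complete S \<longleftrightarrow>
     (\<forall>G c. (\<exists>s. is_step s \<and> src s = G \<and> cls s = c) \<longrightarrow> (\<exists>s\<in>S. src s = G \<and> cls s = c))
   \<and> (\<forall>s1\<in>S. \<forall>s2. cong_lowering s1 s2 \<and> cong_lowering s2 s1 \<longrightarrow> s2 \<in> S)"

definition scheduling_rule :: "('p,'f) step set \<Rightarrow> bool" where
  "scheduling_rule S \<longleftrightarrow> (\<forall>s\<in>S. is_step s) \<and> complete S \<and> deterministic S"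

fun chain :: "('p,'f) pgoal \<Rightarrow> ('p,'f) step list \<Rightarrow> bool" where
  "chain G [] = True"
| "chain G (s # ss) = (is_step s \<and> src s = G \<and> chain (res s) ss)"

fun final :: "('p,'f) pgoal \<Rightarrow> ('p,'f) step list \<Rightarrow> ('p,'f) pgoal" where
  "final G [] = G"
| "final G (s # ss) = final (res s) ss"

definition psld :: "('p,'f) pgoal \<Rightarrow> ('p,'f) step list \<Rightarrow> bool" where
  "psld G ds \<longleftrightarrow> chain G ds \<and>
     (\<forall>j<length ds. cvars (rcl (ds ! j)) \<inter> (pvars G \<union> (\<Union>i<j. cvars (rcl (ds ! i)))) = {})"

definition template :: "('p,'f) step list \<Rightarrow> ('p,'f) clause list" where
  "template ds = map cls ds"

definition nvar :: "('p,'f) step list \<Rightarrow> nat set" where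
  "nvar ds = (\<Union>s\<in>set ds. cvars (rcl s))"

definition deriv_via :: "('p,'f) step set \<Rightarrow> ('p,'f) pgoal \<Rightarrow> ('p,'f) clause list \<Rightarrow> ('p,'f) pgoal \<Rightarrow> bool" where
  "deriv_via S G D R \<longleftrightarrow> (\<exists>ds. psld G ds \<and> set ds \<subseteq> S \<and> template ds = D \<and> final G ds = R)"

end

theory Submission
  imports Defs "HOL-Combinatorics.Permutations"
begin

text \<open>Renaming and shifting every component of a derivation step gives a step from the
  corresponding p-variant of its goal; the two steps are congruent lowerings of each other, so
  the new one lies in every scheduling rule containing the old one, and its resolvent is the
  corresponding p-variant of the old resolvent. Pulling steps back from \<open>G'\<close> to \<open>G\<close> in this
  way, with each clause renamed apart from the finitely many variables used so far, gives (b).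
  For (a) it remains to compare two steps of the rule from the same goal with the same clause.
  After renaming one clause onto the other, determinism yields a shifting relating their
  priorities that fixes the rest of the goal, because a strictly monotone map permuting a
  finite set of rationals is the identity; and two idempotent most general unifiers of the
  same pair differ only by a renaming. Hence their resolvents are p-variants.\<close>

lemma tsubst_tsubst: "tsubst \<tau> (tsubst \<sigma> t) = tsubst (scomp \<sigma> \<tau>) t"
  by (induction t) (auto simp: scomp_def)

lemma tsubst_Var [simp]: "tsubst Var t = t"
  by (induction t) (auto simp: map_idI)

lemma tsubst_cong: "(\<And>x. x \<in> tvars t \<Longrightarrow> \<sigma> x = \<tau> x) \<Longrightarrow> tsubst \<sigma> t = tsubst \<tau> t"
  by (induction t) auto

lemma tvars_tsubst: "tvars (tsubst \<sigma> t) = (\<Union>x\<in>tvars t. tvars (\<sigma> x))"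
  by (induction t) auto

lemma finite_tvars [simp]: "finite (tvars t)"
  by (induction t) auto

lemma tsubst_fixes_vars: "tsubst \<sigma> t = t \<Longrightarrow> x \<in> tvars t \<Longrightarrow> \<sigma> x = Var x"
proof (induction t)
  case (Fn f ts)
  then obtain u where u: "u \<in> set ts" "x \<in> tvars u"
    by auto
  from Fn.prems(1) have "map (tsubst \<sigma>) ts = map id ts"
    by simp
  with u(1) have "tsubst \<sigma> u = u"
    by (metis map_eq_conv id_apply)
  with Fn.IH u show ?case
    by blast
qed simp

lemma asubst_asubst: "asubst \<tau> (asubst \<sigma> a) = asubst (scomp \<sigma> \<tau>) a"
  by (cases a) (simp add: tsubst_tsubst)

lemma asubst_Var [simp]: "asubst Var a = a"
  by (cases a) (simp add: map_idI)

lemma asubst_cong: "(\<And>x. x \<in> avars a \<Longrightarrow> \<sigma> x = \<tau> x) \<Longrightarrow> asubst \<sigma> a = asubst \<tau> a"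
  by (cases a) (auto intro: tsubst_cong)

lemma avars_asubst: "avars (asubst \<sigma> a) = (\<Union>x\<in>avars a. tvars (\<sigma> x))"
  by (cases a) (auto simp: tvars_tsubst)

lemma finite_avars [simp]: "finite (avars a)"
  by (cases a) auto

lemma avars_asubst_Var_comp: "avars (asubst (Var \<circ> f) a) = f ` avars a"
  by (auto simp: avars_asubst)

lemma scomp_Var_comp [simp]: "scomp (Var \<circ> f) (Var \<circ> g) = Var \<circ> (g \<circ> f)"
  by (simp add: scomp_def fun_eq_iff)

lemma bij_inv_cancel [simp]:
  assumes "bij m"
  shows "inv m (m x) = x" "m (inv m x) = x" "inv m \<circ> m = id" "m \<circ> inv m = id"
  using assms by (simp_all add: fun_eq_iff bij_is_inj bij_is_surj surj_f_inv_f)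

lemma renaming_iff_permutation: "renaming \<rho> \<longleftrightarrow> (\<exists>\<pi>. permutation \<pi> \<and> \<rho> = Var \<circ> \<pi>)"
  by (simp add: renaming_def permutation)

lemma renaming_Var: "renaming Var"
  unfolding renaming_iff_permutation by (rule exI[of _ id]) simp

lemma renaming_scomp:
  assumes "renaming \<rho>" "renaming \<rho>'"
  shows "renaming (scomp \<rho> \<rho>')"
proof -
  obtain \<pi> \<pi>' where "permutation \<pi>" "permutation \<pi>'" "\<rho> = Var \<circ> \<pi>" "\<rho>' = Var \<circ> \<pi>'"
    using assms by (auto simp: renaming_iff_permutation)
  then show ?thesis
    unfolding renaming_iff_permutation by (auto intro: permutation_compose)
qed

lemma inj_on_extends_to_permutation:
  fixes f :: "'a \<Rightarrow> 'a"
  assumes "finite D" "inj_on f D"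
  obtains \<pi> where "permutation \<pi>" "\<forall>x\<in>D. \<pi> x = f x"
proof -
  define B where "B = f ` D"
  have "finite B" "card B = card D"
    using assms by (simp_all add: B_def card_image)
  then have "card (B - D) = card (D - B)"
    using assms(1) by (metis Int_commute card_Diff_subset_Int finite_Int)
  then obtain h where h: "bij_betw h (B - D) (D - B)"
    using \<open>finite B\<close> assms(1) finite_same_card_bij by (meson finite_Diff)
  define \<pi> where "\<pi> x = (if x \<in> D then f x else if x \<in> B then h x else x)" for x
  have "bij_betw \<pi> (D \<union> (B - D)) (B \<union> (D - B))"
    unfolding \<pi>_def
    by (rule bij_betw_disjoint_Un) (use assms(2) h in \<open>auto simp: B_def bij_betw_def inj_on_def\<close>)
  then have "\<pi> permutes (D \<union> B)"
    by (intro bij_imp_permutes) (auto simp: \<pi>_def Un_commute)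
  with assms(1) \<open>finite B\<close> have "permutation \<pi>"
    by (auto simp: permutation_permutes)
  then show thesis
    using that by (simp add: \<pi>_def)
qed

lemma inj_on_extends_to_permutation_avoiding:
  fixes g :: "nat \<Rightarrow> nat"
  assumes "finite B" "inj_on g B" "finite W" "B \<inter> W = {}" "finite F"
  obtains n where "permutation n" "\<forall>x\<in>B. n x = g x" "n ` W \<inter> F = {}"
proof -
  have "infinite (- (F \<union> g ` B))"
    using assms(1,5) by (simp add: Compl_eq_Diff_UNIV infinite_UNIV_nat)
  then obtain Z where Z: "finite Z" "card Z = card W" "Z \<subseteq> - (F \<union> g ` B)"
    using infinite_arbitrarily_large[of _ "card W"] by blast
  then obtain h where h: "bij_betw h W Z"
    using assms(3) finite_same_card_bij by metis
  define f where "f x = (if x \<in> B then g x else h x)" for x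
  have "inj_on f (B \<union> W)"
    unfolding inj_on_Un
  proof (intro conjI)
    show "inj_on f B"
      using assms(2) by (simp add: f_def inj_on_def)
    show "inj_on f W"
      using h assms(4) by (auto simp: f_def inj_on_def bij_betw_def)
    have "f ` (W - B) \<subseteq> Z"
      using h by (auto simp: f_def bij_betw_def)
    then show "f ` (B - W) \<inter> f ` (W - B) = {}"
      using Z(3) by (auto simp: f_def)
  qed
  then obtain n where n: "permutation n" "\<forall>x\<in>B \<union> W. n x = f x"
    using inj_on_extends_to_permutation[OF finite_UnI[OF assms(1,3)]] by blast
  have "\<forall>x\<in>B. n x = g x"
    using n(2) by (simp add: f_def)
  moreover have "n ` W \<subseteq> Z"
    using n(2) h assms(4) by (auto simp: f_def bij_betw_def)
  then have "n ` W \<inter> F = {}"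
    using Z(3) by blast
  ultimately show thesis
    using n(1) that by blast
qed

text \<open>The composed instantiation \<open>\<delta>;\<delta>'\<close> fixes every variable in the range of \<open>\<theta>2\<close>,
  so \<open>\<delta>\<close> maps these variables injectively to variables.\<close>
lemma mutual_instances_differ_by_renaming:
  assumes "\<theta>1 = scomp \<theta>2 \<delta>" "\<theta>2 = scomp \<theta>1 \<delta>'" "finite W"
  obtains g where "permutation g" "\<forall>x\<in>W. \<theta>1 x = tsubst (Var \<circ> g) (\<theta>2 x)"
proof -
  define R where "R = (\<Union>x\<in>W. tvars (\<theta>2 x))"
  have "finite R"
    using assms(3) by (simp add: R_def)
  have \<delta>_inverse: "tsubst \<delta>' (\<delta> y) = Var y" if "y \<in> R" for y
  proof -
    from that obtain x where x: "y \<in> tvars (\<theta>2 x)"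
      by (auto simp: R_def)
    have "\<theta>1 x = tsubst \<delta> (\<theta>2 x)" "\<theta>2 x = tsubst \<delta>' (\<theta>1 x)"
      by (simp add: assms(1) scomp_def, simp add: assms(2) scomp_def)
    then have "tsubst (scomp \<delta> \<delta>') (\<theta>2 x) = \<theta>2 x"
      by (simp add: tsubst_tsubst[symmetric])
    from tsubst_fixes_vars[OF this x] show ?thesis
      by (simp add: scomp_def)
  qed
  define f where "f y = (case \<delta> y of Var z \<Rightarrow> z | _ \<Rightarrow> y)" for y
  have \<delta>_f: "\<delta> y = Var (f y)" if "y \<in> R" for y
    using \<delta>_inverse[OF that] by (cases "\<delta> y") (auto simp: f_def)
  have "inj_on f R"
    by (rule inj_onI) (metis \<delta>_f \<delta>_inverse trm.inject(1))
  then obtain g where g: "permutation g" "\<forall>y\<in>R. g y = f y"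
    using \<open>finite R\<close> inj_on_extends_to_permutation by blast
  have "\<theta>1 x = tsubst (Var \<circ> g) (\<theta>2 x)" if "x \<in> W" for x
    unfolding assms(1) scomp_def
    by (rule tsubst_cong) (use that g \<delta>_f in \<open>auto simp: R_def\<close>)
  with g(1) show thesis
    using that by blast
qed

lemma idem_rel_mgu_unique_up_to_renaming:
  assumes "idem_rel_mgu \<theta> a b" "idem_rel_mgu \<theta>' a b" "finite W"
  obtains g where "permutation g" "\<forall>x\<in>W. \<theta>' x = tsubst (Var \<circ> g) (\<theta> x)"
proof -
  obtain \<delta> \<delta>' where "\<theta>' = scomp \<theta> \<delta>" "\<theta> = scomp \<theta>' \<delta>'"
    using assms(1,2) unfolding idem_rel_mgu_def by blast
  with assms(3) show thesis
    using that mutual_instances_differ_by_renaming by blast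
qed

definition rename_subst :: "(nat \<Rightarrow> nat) \<Rightarrow> 'f subst \<Rightarrow> 'f subst" where
  "rename_subst m \<theta> = (\<lambda>x. tsubst (Var \<circ> m) (\<theta> (inv m x)))"

lemma rename_subst_apply: "rename_subst m \<theta> x = tsubst (Var \<circ> m) (\<theta> (inv m x))"
  by (simp add: rename_subst_def)

lemma scomp_rename_subst:
  "bij m \<Longrightarrow> scomp (Var \<circ> m) (rename_subst m \<theta>) = scomp \<theta> (Var \<circ> m)"
  by (simp add: fun_eq_iff scomp_def rename_subst_apply)

lemma asubst_rename_subst:
  "bij m \<Longrightarrow> asubst (rename_subst m \<theta>) (asubst (Var \<circ> m) a) = asubst (Var \<circ> m) (asubst \<theta> a)"
  by (simp add: asubst_asubst scomp_rename_subst)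

lemma rename_subst_eq_Var_iff:
  assumes "bij m"
  shows "rename_subst m \<theta> x = Var x \<longleftrightarrow> \<theta> (inv m x) = Var (inv m x)"
proof
  assume "rename_subst m \<theta> x = Var x"
  then have "tsubst (Var \<circ> inv m) (rename_subst m \<theta> x) = Var (inv m x)"
    by simp
  with assms show "\<theta> (inv m x) = Var (inv m x)"
    by (simp add: rename_subst_apply tsubst_tsubst)
qed (use assms in \<open>simp add: rename_subst_apply\<close>)

lemma mem_image_bij_iff: "bij m \<Longrightarrow> x \<in> m ` S \<longleftrightarrow> inv m x \<in> S"
  by (metis bij_inv_eq_iff image_iff)

lemma sdom_rename_subst: "bij m \<Longrightarrow> sdom (rename_subst m \<theta>) = m ` sdom \<theta>"
  by (auto simp: sdom_def rename_subst_eq_Var_iff mem_image_bij_iff)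

lemma srange_vars_rename_subst:
  "bij m \<Longrightarrow> srange_vars (rename_subst m \<theta>) = m ` srange_vars \<theta>"
  by (simp add: srange_vars_def sdom_rename_subst rename_subst_apply tvars_tsubst
      UNION_singleton_eq_range image_UN)

lemma rename_subst_idem:
  assumes "bij m" "scomp \<theta> \<theta> = \<theta>"
  shows "scomp (rename_subst m \<theta>) (rename_subst m \<theta>) = rename_subst m \<theta>"
proof
  fix x
  have "scomp (rename_subst m \<theta>) (rename_subst m \<theta>) x
      = tsubst (scomp (Var \<circ> m) (rename_subst m \<theta>)) (\<theta> (inv m x))"
    by (simp add: scomp_def rename_subst_apply tsubst_tsubst)
  also have "\<dots> = tsubst (Var \<circ> m) (tsubst \<theta> (\<theta> (inv m x)))"
    using assms(1) by (simp add: scomp_rename_subst tsubst_tsubst)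
  also have "tsubst \<theta> (\<theta> (inv m x)) = \<theta> (inv m x)"
    using fun_cong[OF assms(2)] by (simp add: scomp_def)
  also have "tsubst (Var \<circ> m) (\<theta> (inv m x)) = rename_subst m \<theta> x"
    by (simp add: rename_subst_apply)
  finally show "scomp (rename_subst m \<theta>) (rename_subst m \<theta>) x = rename_subst m \<theta> x" .
qed

lemma idem_rel_mgu_rename_subst:
  assumes "bij m" and mgu: "idem_rel_mgu \<theta> a b"
  shows "idem_rel_mgu (rename_subst m \<theta>) (asubst (Var \<circ> m) a) (asubst (Var \<circ> m) b)"
  unfolding idem_rel_mgu_def
proof (intro conjI allI impI)
  show "unifier (rename_subst m \<theta>) (asubst (Var \<circ> m) a) (asubst (Var \<circ> m) b)"
    using assms by (simp add: unifier_def idem_rel_mgu_def asubst_rename_subst)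
next
  fix \<tau>
  assume "unifier \<tau> (asubst (Var \<circ> m) a) (asubst (Var \<circ> m) b)"
  then have "unifier (scomp (Var \<circ> m) \<tau>) a b"
    by (simp add: unifier_def asubst_asubst)
  with mgu obtain \<delta> where \<delta>: "scomp (Var \<circ> m) \<tau> = scomp \<theta> \<delta>"
    by (auto simp: idem_rel_mgu_def)
  have "\<tau> = scomp (rename_subst m \<theta>) (\<delta> \<circ> inv m)"
  proof
    fix x
    have "\<tau> x = scomp (Var \<circ> m) \<tau> (inv m x)"
      using assms(1) by (simp add: scomp_def)
    also have "\<dots> = tsubst \<delta> (\<theta> (inv m x))"
      by (metis \<delta> scomp_def)
    also have "\<dots> = scomp (rename_subst m \<theta>) (\<delta> \<circ> inv m) x"
      using assms(1) by (simp add: scomp_def rename_subst_apply tsubst_tsubst comp_def)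
    finally show "\<tau> x = scomp (rename_subst m \<theta>) (\<delta> \<circ> inv m) x" .
  qed
  then show "\<exists>\<delta>. \<tau> = scomp (rename_subst m \<theta>) \<delta>"
    by blast
next
  show "scomp (rename_subst m \<theta>) (rename_subst m \<theta>) = rename_subst m \<theta>"
    using assms by (simp add: idem_rel_mgu_def rename_subst_idem)
next
  have "sdom \<theta> \<union> srange_vars \<theta> \<subseteq> avars a \<union> avars b"
    using mgu by (simp add: idem_rel_mgu_def)
  with assms(1) show "sdom (rename_subst m \<theta>) \<union> srange_vars (rename_subst m \<theta>)
      \<subseteq> avars (asubst (Var \<circ> m) a) \<union> avars (asubst (Var \<circ> m) b)"
    by (auto simp: sdom_rename_subst srange_vars_rename_subst avars_asubst_Var_comp)
qed

lemma shifting_id [simp]: "shifting id"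
  by (simp add: shifting_def strict_mono_def)

lemma shifting_comp: "shifting f \<Longrightarrow> shifting g \<Longrightarrow> shifting (f \<circ> g)"
  by (auto simp: shifting_def bij_comp strict_mono_def)

lemma shifting_inv: "shifting f \<Longrightarrow> shifting (inv f)"
  unfolding shifting_def
  by (metis bij_imp_bij_inv bij_inv_cancel(1) bij_is_surj strict_mono_inv)

lemma strict_mono_fixes_invariant_finite_set:
  fixes f :: "'a::linorder \<Rightarrow> 'a"
  assumes "strict_mono f" "finite P" "f ` P \<subseteq> P" "p \<in> P"
  shows "f p = p"
proof -
  have "f ` P = P"
    using assms(1-3) strict_mono_imp_inj_on endo_inj_surj by blast
  define xs where "xs = sorted_list_of_set P"
  have "sorted_wrt (<) (map f xs)"
    using assms(1) strict_sorted_list_of_set[of P]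
    by (simp add: xs_def sorted_wrt_map strict_mono_less sorted_wrt_mono_rel)
  moreover have "set (map f xs) = P"
    using assms(2) \<open>f ` P = P\<close> by (simp add: xs_def)
  ultimately have "map f xs = xs"
    using assms(2) by (simp add: xs_def strict_sorted_equal)
  moreover have "p \<in> set xs"
    using assms(2,4) by (simp add: xs_def)
  ultimately show ?thesis
    by (metis map_eq_conv list.map_id id_apply)
qed

lemma pshift_psubst_eq_image: "pshift \<sigma> (psubst l G) = pat_map l \<sigma> ` G"
  by (force simp: pshift_def psubst_def pat_map_def image_iff)

lemma psubst_eq_image: "psubst l G = pat_map l id ` G"
  by (force simp: psubst_def pat_map_def image_iff)

lemma pshift_eq_image: "pshift \<sigma> G = pat_map Var \<sigma> ` G"
  by (force simp: pshift_def pat_map_def image_iff)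

lemma psubst_psubst: "psubst \<tau> (psubst \<sigma> G) = psubst (scomp \<sigma> \<tau>) G"
  by (simp add: psubst_eq_image image_image pat_map_def asubst_asubst)

lemma pshift_pshift: "pshift f (pshift g G) = pshift (f \<circ> g) G"
  by (simp add: pshift_eq_image image_image pat_map_def)

lemma psubst_pshift: "psubst \<theta> (pshift f G) = pshift f (psubst \<theta> G)"
  by (simp add: pshift_eq_image psubst_eq_image image_image pat_map_def)

lemma psubst_Un: "psubst \<theta> (A \<union> B) = psubst \<theta> A \<union> psubst \<theta> B"
  by (simp add: psubst_def image_Un)

lemma pshift_Un: "pshift f (A \<union> B) = pshift f A \<union> pshift f B"
  by (simp add: pshift_def image_Un)

lemma psubst_Var [simp]: "psubst Var G = G"
  by (simp add: psubst_eq_image pat_map_def)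

lemma pshift_id [simp]: "pshift id G = G"
  by (simp add: pshift_eq_image pat_map_def)

lemma psubst_cong: "(\<And>x. x \<in> pvars G \<Longrightarrow> \<sigma> x = \<tau> x) \<Longrightarrow> psubst \<sigma> G = psubst \<tau> G"
  unfolding psubst_eq_image pat_map_def pvars_def
  by (rule image_cong) (auto intro!: asubst_cong)

lemma pshift_cong: "(\<And>p. p \<in> prios G \<Longrightarrow> f p = g p) \<Longrightarrow> pshift f G = pshift g G"
  unfolding pshift_eq_image pat_map_def prios_def
  by (rule image_cong) auto

lemma pvars_psubst_Var_comp: "pvars (psubst (Var \<circ> f) G) = f ` pvars G"
  by (auto simp: pvars_def psubst_eq_image pat_map_def avars_asubst_Var_comp)

lemma pvars_pshift [simp]: "pvars (pshift f G) = pvars G"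
  by (auto simp: pvars_def pshift_eq_image pat_map_def)

lemma prios_Un: "prios (A \<union> B) = prios A \<union> prios B"
  by (simp add: prios_def image_Un)

lemma prios_psubst [simp]: "prios (psubst l G) = prios G"
  by (simp add: prios_def psubst_eq_image pat_map_def image_image)

lemma prios_pshift: "prios (pshift f G) = f ` prios G"
  by (simp add: prios_def pshift_eq_image pat_map_def image_image)

lemma finite_pvars: "finite G \<Longrightarrow> finite (pvars G)"
  by (simp add: pvars_def)

lemma inj_pat_map: "bij m \<Longrightarrow> inj \<sigma> \<Longrightarrow> inj (pat_map (Var \<circ> m) \<sigma>)"
  unfolding inj_def pat_map_def
  by (metis asubst_asubst asubst_Var bij_inv_cancel(3) comp_id scomp_Var_comp prod.expand prod.inject)

lemma is_pgoal_pshift_psubst: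
  assumes "is_pgoal G" "inj \<sigma>"
  shows "is_pgoal (pshift \<sigma> (psubst l G))"
  using assms by (auto simp: is_pgoal_def pshift_psubst_eq_image pat_map_def inj_on_def)

lemma least_patom_unique: "least_patom G x \<Longrightarrow> least_patom G y \<Longrightarrow> x = y"
  unfolding least_patom_def by force

lemma sel_eqI: "least_patom G x \<Longrightarrow> sel G = x"
  unfolding sel_def using least_patom_unique by blast

lemma least_patom_insert: "\<forall>y\<in>K. snd a < snd y \<Longrightarrow> least_patom (insert a K) a"
  by (auto simp: least_patom_def)

lemma least_patom_image_pat_map:
  "least_patom G x \<Longrightarrow> strict_mono \<sigma> \<Longrightarrow> least_patom (pat_map l \<sigma> ` G) (pat_map l \<sigma> x)"
  unfolding least_patom_def pat_map_def by (auto simp: strict_mono_less)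

lemma csubst_csubst: "csubst \<tau> (csubst \<sigma> c) = csubst (scomp \<sigma> \<tau>) c"
  by (simp add: csubst_def asubst_asubst psubst_psubst)

lemma cvars_csubst_Var_comp: "cvars (csubst (Var \<circ> f) c) = f ` cvars c"
  by (auto simp: cvars_def csubst_def avars_asubst_Var_comp pvars_psubst_Var_comp)

lemma csubst_cong: "(\<And>x. x \<in> cvars c \<Longrightarrow> \<sigma> x = \<tau> x) \<Longrightarrow> csubst \<sigma> c = csubst \<tau> c"
  unfolding csubst_def cvars_def by (metis Un_iff asubst_cong psubst_cong)

lemma finite_cvars: "is_clause c \<Longrightarrow> finite (cvars c)"
  by (auto simp: cvars_def is_clause_def is_pgoal_def finite_pvars)

lemma p_variant_iff_permutation:
  "p_variant F G \<longleftrightarrow> (\<exists>m \<sigma>. permutation m \<and> shifting \<sigma> \<and> F = pshift \<sigma> (psubst (Var \<circ> m) G))"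
  unfolding p_variant_def renaming_iff_permutation by blast

lemma p_variant_trans: "p_variant F G \<Longrightarrow> p_variant G H \<Longrightarrow> p_variant F H"
  unfolding p_variant_def
  by (metis renaming_scomp shifting_comp psubst_psubst psubst_pshift pshift_pshift)

lemma is_stepD:
  assumes "is_step s"
  shows "is_pgoal (src s)" "is_clause (cls s)" "renaming (ren s)" "shifting (shf s)"
    "least_patom (src s) (sel (src s))" "pvars (src s) \<inter> cvars (rcl s) = {}"
    "idem_rel_mgu (umgu s) (fst (sel (src s))) (fst (rcl s))"
    "prios (src s - {sel (src s)}) \<inter> prios (pshift (shf s) (snd (rcl s))) = {}"
  using assms by (simp_all add: is_step_def) (metis sel_eqI)

lemma finite_cvars_rcl:
  assumes "is_step s"
  shows "finite (cvars (rcl s))"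
proof -
  obtain \<pi> where "ren s = Var \<circ> \<pi>"
    using is_stepD(3)[OF assms] by (auto simp: renaming_iff_permutation)
  then show ?thesis
    using finite_cvars[OF is_stepD(2)[OF assms]] by (simp add: rcl_def cvars_csubst_Var_comp)
qed

definition variant_step :: "(nat \<Rightarrow> nat) \<Rightarrow> (rat \<Rightarrow> rat) \<Rightarrow> ('p,'f) step \<Rightarrow> ('p,'f) step" where
  "variant_step m \<sigma> s = \<lparr>src = pshift \<sigma> (psubst (Var \<circ> m) (src s)), cls = cls s,
     ren = scomp (ren s) (Var \<circ> m), umgu = rename_subst m (umgu s), shf = \<sigma> \<circ> shf s\<rparr>"

lemma variant_step_simps [simp]:
  "src (variant_step m \<sigma> s) = pshift \<sigma> (psubst (Var \<circ> m) (src s))"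
  "cls (variant_step m \<sigma> s) = cls s"
  "ren (variant_step m \<sigma> s) = scomp (ren s) (Var \<circ> m)"
  "umgu (variant_step m \<sigma> s) = rename_subst m (umgu s)"
  "shf (variant_step m \<sigma> s) = \<sigma> \<circ> shf s"
  by (simp_all add: variant_step_def)

lemma rcl_variant_step: "rcl (variant_step m \<sigma> s) = csubst (Var \<circ> m) (rcl s)"
  by (simp add: rcl_def csubst_csubst)

lemma variant_step_inverse:
  assumes "bij m" "bij \<sigma>"
  shows "variant_step m \<sigma> (variant_step (inv m) (inv \<sigma>) s) = s"
proof (rule step.equality)
  show "src (variant_step m \<sigma> (variant_step (inv m) (inv \<sigma>) s)) = src s"
    using assms by (simp add: psubst_pshift pshift_pshift psubst_psubst)
  have "scomp (scomp \<rho> (Var \<circ> inv m)) (Var \<circ> m) = \<rho>" for \<rho> :: "'f subst"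
    using assms(1) by (simp add: fun_eq_iff scomp_def tsubst_tsubst)
  then show "ren (variant_step m \<sigma> (variant_step (inv m) (inv \<sigma>) s)) = ren s"
    by simp
  show "umgu (variant_step m \<sigma> (variant_step (inv m) (inv \<sigma>) s)) = umgu s"
    using assms(1) by (simp add: fun_eq_iff rename_subst_apply tsubst_tsubst inv_inv_eq)
  show "shf (variant_step m \<sigma> (variant_step (inv m) (inv \<sigma>) s)) = shf s"
    using assms(2) by (simp add: comp_assoc[symmetric])
qed simp_all

lemma sel_variant_step:
  "is_step s \<Longrightarrow> shifting \<sigma> \<Longrightarrow>
    sel (src (variant_step m \<sigma> s)) = pat_map (Var \<circ> m) \<sigma> (sel (src s))"
  by (auto simp: pshift_psubst_eq_image shifting_def
      intro: sel_eqI least_patom_image_pat_map is_stepD(5))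

lemma src_variant_step_minus_sel:
  assumes "is_step s" "bij m" "shifting \<sigma>"
  shows "src (variant_step m \<sigma> s) - {sel (src (variant_step m \<sigma> s))}
    = pshift \<sigma> (psubst (Var \<circ> m) (src s - {sel (src s)}))"
proof -
  have "inj (pat_map (Var \<circ> m) \<sigma>)"
    using assms(2,3) by (intro inj_pat_map) (auto simp: shifting_def bij_is_inj)
  from image_set_diff[OF this, of "src s" "{sel (src s)}"] show ?thesis
    using sel_variant_step[OF assms(1,3)] by (simp add: pshift_psubst_eq_image)
qed

lemma is_step_variant_step:
  assumes s: "is_step s" and m: "permutation m" and \<sigma>: "shifting \<sigma>"
  shows "is_step (variant_step m \<sigma> s)"
proof -
  let ?v = "variant_step m \<sigma> s"
  have bij: "bij m" "bij \<sigma>"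
    using m \<sigma> by (auto simp: permutation shifting_def)
  note sD = is_stepD[OF s]
  have "renaming (Var \<circ> m)"
    using m by (auto simp: renaming_iff_permutation)
  with sD(3) have ren: "renaming (ren ?v)"
    using renaming_scomp by simp
  have least: "least_patom (src ?v) (sel (src ?v))"
    using sD(5) \<sigma> sel_variant_step[OF s \<sigma>]
    by (simp add: pshift_psubst_eq_image shifting_def least_patom_image_pat_map)
  have vars: "pvars (src ?v) \<inter> cvars (rcl ?v) = {}"
    using sD(6) bij(1)
    by (simp add: rcl_variant_step pvars_psubst_Var_comp cvars_csubst_Var_comp
        flip: image_Int[OF bij_is_inj])
  have mgu: "idem_rel_mgu (umgu ?v) (fst (sel (src ?v))) (fst (rcl ?v))"
    using idem_rel_mgu_rename_subst[OF bij(1) sD(7)] sel_variant_step[OF s \<sigma>]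
    by (simp add: rcl_variant_step pat_map_def csubst_def)
  have "prios (src ?v - {sel (src ?v)}) = \<sigma> ` prios (src s - {sel (src s)})"
    using src_variant_step_minus_sel[OF s bij(1) \<sigma>] by (simp add: prios_pshift)
  moreover have "prios (pshift (shf ?v) (snd (rcl ?v))) = \<sigma> ` prios (pshift (shf s) (snd (rcl s)))"
    by (simp add: rcl_variant_step csubst_def prios_pshift image_comp)
  ultimately have prios: "prios (src ?v - {sel (src ?v)}) \<inter> prios (pshift (shf ?v) (snd (rcl ?v))) = {}"
    using sD(8) bij(2) by (simp flip: image_Int[OF bij_is_inj])
  have "is_pgoal (src ?v)"
    using sD(1) bij(2) by (simp add: is_pgoal_pshift_psubst bij_is_inj)
  moreover have "shifting (shf ?v)"
    using sD(4) \<sigma> by (simp add: shifting_comp)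
  moreover have "is_clause (cls ?v)"
    using sD(2) by simp
  moreover have "\<exists>x. least_patom (src ?v) x"
    using least by blast
  ultimately show ?thesis
    unfolding is_step_def using ren vars mgu prios by (intro conjI) assumption+
qed

lemma psubst_rename_subst:
  "bij m \<Longrightarrow> psubst (rename_subst m \<theta>) (psubst (Var \<circ> m) G) = psubst (Var \<circ> m) (psubst \<theta> G)"
  by (simp add: psubst_psubst scomp_rename_subst)

lemma res_variant_step:
  assumes "is_step s" "bij m" "shifting \<sigma>"
  shows "res (variant_step m \<sigma> s) = pshift \<sigma> (psubst (Var \<circ> m) (res s))"
  using src_variant_step_minus_sel[OF assms] assms(2)
  by (simp add: res_def rcl_variant_step csubst_def psubst_Un pshift_Un psubst_pshift
      pshift_pshift psubst_rename_subst flip: pshift_pshift)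

lemma p_variant_res_variant_step:
  assumes "is_step s" "permutation m" "shifting \<sigma>"
  shows "p_variant (res (variant_step m \<sigma> s)) (res s)"
  using res_variant_step[OF assms(1) _ assms(3)] assms(2,3)
  by (auto simp: p_variant_iff_permutation permutation)

lemma cong_lowering_variant_step:
  assumes s: "is_step s" and m: "permutation m" and \<sigma>: "shifting \<sigma>"
  shows "cong_lowering (variant_step m \<sigma> s) s"
proof -
  define a where "a = sel (src s)"
  define K where "K = src s - {a}"
  have a: "src s = insert a K" "\<forall>y\<in>K. snd a < snd y"
    using is_stepD(5)[OF s] by (auto simp: a_def K_def least_patom_def)
  have "lower_data (variant_step m \<sigma> s) s a K (Var \<circ> m) \<sigma> {}"
    unfolding lower_data_def
    using s is_step_variant_step[OF assms] m \<sigma> a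
    by (auto simp: renaming_iff_permutation pshift_psubst_eq_image pat_map_def prios_def
        shifting_def strict_mono_less)
  then show ?thesis
    unfolding cong_lowering_def using \<sigma> by (fastforce simp: pshift_pshift)
qed

text \<open>A step and its variant are congruent lowerings of each other (with empty extension),
  so clause (ii) of completeness puts the variant into the rule.\<close>
lemma variant_step_in_scheduling_rule:
  assumes S: "scheduling_rule S" "s \<in> S" and m: "permutation m" and \<sigma>: "shifting \<sigma>"
  shows "variant_step m \<sigma> s \<in> S"
proof -
  have s: "is_step s"
    using S by (simp add: scheduling_rule_def)
  have "s = variant_step (inv m) (inv \<sigma>) (variant_step m \<sigma> s)"
    using variant_step_inverse[of "inv m" "inv \<sigma>" s] m \<sigma>
    by (simp add: permutation shifting_def inv_inv_eq bij_imp_bij_inv)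
  then have "cong_lowering s (variant_step m \<sigma> s)"
    by (metis cong_lowering_variant_step is_step_variant_step s m \<sigma> permutation_inverse shifting_inv)
  moreover have "cong_lowering (variant_step m \<sigma> s) s"
    by (rule cong_lowering_variant_step[OF s m \<sigma>])
  ultimately show ?thesis
    using S by (auto simp: scheduling_rule_def complete_def)
qed

text \<open>The step from \<open>G\<close> is the variant of \<open>s'\<close> under a permutation that undoes the renaming
  of \<open>G\<close> and moves the variables of the renamed clause outside \<open>F\<close>.\<close>
lemma step_from_p_variant_source:
  assumes S: "scheduling_rule S" "s' \<in> S" and var: "p_variant (src s') G" and "finite F"
  obtains t where "t \<in> S" "src t = G" "cls t = cls s'" "cvars (rcl t) \<inter> F = {}"
    "p_variant (res s') (res t)"
proof -
  obtain l \<sigma> where l: "permutation l" and \<sigma>: "shifting \<sigma>"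
    and src': "src s' = pshift \<sigma> (psubst (Var \<circ> l) G)"
    using var by (auto simp: p_variant_iff_permutation)
  have "is_step s'"
    using S by (simp add: scheduling_rule_def)
  have "bij l"
    using l by (simp add: permutation)
  define W where "W = cvars (rcl s')"
  have "finite (pvars (src s'))" "finite W" "pvars (src s') \<inter> W = {}"
    using is_stepD(1,6)[OF \<open>is_step s'\<close>] finite_cvars_rcl[OF \<open>is_step s'\<close>]
    by (simp_all add: W_def is_pgoal_def finite_pvars)
  moreover have "inj_on (inv l) (pvars (src s'))"
    using bij_is_inj[OF bij_imp_bij_inv[OF \<open>bij l\<close>]] by (rule inj_on_subset) simp
  ultimately obtain n where n: "permutation n" "\<forall>x\<in>pvars (src s'). n x = inv l x"
    "n ` W \<inter> F = {}"
    using inj_on_extends_to_permutation_avoiding \<open>finite F\<close> by metis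
  have "bij n"
    using n(1) by (simp add: permutation)
  define t where "t = variant_step n (inv \<sigma>) s'"
  have "t \<in> S"
    unfolding t_def using S n(1) \<sigma> by (simp add: variant_step_in_scheduling_rule shifting_inv)
  have "psubst (Var \<circ> (n \<circ> l)) G = G"
    using n(2) \<open>bij l\<close> by (intro trans[OF psubst_cong psubst_Var]) (simp add: src' pvars_psubst_Var_comp)
  then have "src t = G"
    using \<sigma> by (simp add: t_def src' psubst_pshift pshift_pshift psubst_psubst shifting_def)
  have "cvars (rcl t) \<inter> F = {}"
    using n(3) by (simp add: t_def W_def rcl_variant_step cvars_csubst_Var_comp)
  have "s' = variant_step (inv n) \<sigma> t"
    using variant_step_inverse[of "inv n" \<sigma> s'] \<open>bij n\<close> \<sigma>
    by (simp add: t_def shifting_def inv_inv_eq bij_imp_bij_inv)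
  moreover have "is_step t"
    using S(1) \<open>t \<in> S\<close> by (simp add: scheduling_rule_def)
  ultimately have "p_variant (res s') (res t)"
    using p_variant_res_variant_step permutation_inverse[OF n(1)] \<sigma> by metis
  with \<open>t \<in> S\<close> \<open>src t = G\<close> \<open>cvars (rcl t) \<inter> F = {}\<close> show thesis
    using that by (simp add: t_def)
qed

lemma lowering_same_source:
  assumes "is_step s" "is_step t" "src t = src s" "cls t = cls s"
  shows "lowering t s"
proof -
  define a where "a = sel (src s)"
  have "src s = insert a (src s - {a})" "\<forall>y\<in>src s - {a}. snd a < snd y"
    using is_stepD(5)[OF assms(1)] by (auto simp: a_def least_patom_def)
  then have "lower_data t s a (src s - {a}) Var id {}"
    using assms renaming_Var by (auto simp: lower_data_def pat_map_def prios_def)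
  then show ?thesis
    unfolding lowering_def by blast
qed

text \<open>Between steps from the same goal, a lowering can only permute the priorities of the
  rest of the goal, and a strictly monotone permutation of a finite set is the identity.\<close>
lemma cong_lowering_same_source:
  assumes "cong_lowering t s" "src t = src s"
  obtains \<rho> where "shifting \<rho>" "pshift \<rho> (src s - {sel (src s)}) = src s - {sel (src s)}"
    "pshift \<rho> (pshift (shf s) (snd (cls s))) = pshift (shf t) (snd (cls s))"
proof -
  obtain a K l \<sigma> X \<rho> where ld: "lower_data t s a K l \<sigma> X" and "shifting \<rho>"
    and \<rho>K: "pshift \<rho> K = pshift \<sigma> K"
    and \<rho>B: "pshift \<rho> (pshift (shf s) (snd (cls s))) = pshift (shf t) (snd (cls s))"
    using assms(1) unfolding cong_lowering_def by blast
  let ?K' = "pshift \<sigma> (psubst l K) \<union> X"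
  have s: "is_step s" "src s = insert a K" "\<forall>y\<in>K. snd a < snd y"
    and t: "src t = insert (pat_map l \<sigma> a) ?K'" "\<forall>y\<in>?K'. snd (pat_map l \<sigma> a) < snd y"
    and \<sigma>: "strict_mono \<sigma>"
    using ld by (auto simp: lower_data_def shifting_def)
  have "least_patom (src s) a" "least_patom (src s) (pat_map l \<sigma> a)"
    using s(2,3) t assms(2) least_patom_insert by metis+
  then have a: "pat_map l \<sigma> a = a" "sel (src s) = a"
    using least_patom_unique sel_eqI by metis+
  have "a \<notin> K" "pat_map l \<sigma> a \<notin> ?K'"
    using s(3) t(2) by auto
  then have K: "src s - {sel (src s)} = K" "?K' = K"
    using s(2) t(1) assms(2) a by auto
  have "finite (prios K)"
    using is_stepD(1)[OF s(1)] s(2) by (simp add: is_pgoal_def prios_def)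
  moreover have "prios K = \<sigma> ` prios K \<union> prios X"
    using arg_cong[OF K(2), of prios] by (simp add: prios_Un prios_pshift)
  ultimately have "\<forall>p\<in>prios K. \<sigma> p = p"
    using \<sigma> strict_mono_fixes_invariant_finite_set by blast
  then have "pshift \<sigma> K = K"
    using pshift_cong[of K \<sigma> id] by simp
  with \<rho>K K(1) \<open>shifting \<rho>\<close> \<rho>B show thesis
    using that by simp
qed

lemma renamed_clauses_differ_by_permutation:
  assumes "renaming \<rho>1" "renaming \<rho>2" "is_clause c" "finite V"
    "V \<inter> cvars (csubst \<rho>1 c) = {}" "V \<inter> cvars (csubst \<rho>2 c) = {}"
  obtains \<mu> where "permutation \<mu>" "\<forall>x\<in>V. \<mu> x = x" "csubst (Var \<circ> \<mu>) (csubst \<rho>1 c) = csubst \<rho>2 c"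
proof -
  obtain p1 p2 where p: "bij p1" "bij p2" "\<rho>1 = Var \<circ> p1" "\<rho>2 = Var \<circ> p2"
    using assms(1,2) by (auto simp: renaming_iff_permutation permutation)
  define f where "f x = (if x \<in> V then x else p2 (inv p1 x))" for x
  have disj: "V \<inter> p1 ` cvars c = {}" "V \<inter> p2 ` cvars c = {}"
    using assms(5,6) p by (simp_all add: cvars_csubst_Var_comp)
  have inj: "inj_on f (V \<union> p1 ` cvars c)"
    unfolding inj_on_Un
  proof (intro conjI)
    show "inj_on f V"
      by (simp add: f_def inj_on_def)
    show "inj_on f (p1 ` cvars c)"
    proof (rule inj_onI)
      fix x y
      assume "x \<in> p1 ` cvars c" "y \<in> p1 ` cvars c" "f x = f y"
      moreover from disj(1) this(1,2) have "x \<notin> V" "y \<notin> V"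
        by blast+
      ultimately have "p2 (inv p1 x) = p2 (inv p1 y)"
        by (simp add: f_def)
      with p(1,2) show "x = y"
        by (metis bij_inv_cancel(2) bij_is_inj injD)
    qed
    show "f ` (V - p1 ` cvars c) \<inter> f ` (p1 ` cvars c - V) = {}"
      using disj p(1) by (auto simp: f_def)
  qed
  have "finite (V \<union> p1 ` cvars c)"
    using assms(4) finite_cvars[OF assms(3)] by simp
  then obtain \<mu> where \<mu>: "permutation \<mu>" "\<forall>x\<in>V \<union> p1 ` cvars c. \<mu> x = f x"
    using inj_on_extends_to_permutation[OF _ inj] by blast
  have "csubst (Var \<circ> \<mu>) (csubst \<rho>1 c) = csubst \<rho>2 c"
    unfolding p(3,4) csubst_csubst scomp_Var_comp
    by (rule csubst_cong) (use \<mu>(2) disj(1) p(1) in \<open>auto simp: f_def\<close>)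
  with \<mu> show thesis
    using that by (simp add: f_def)
qed

lemma res_same_source_same_renamed_clause:
  assumes S: "scheduling_rule S" "s \<in> S" "t \<in> S"
    and eq: "src t = src s" "cls t = cls s" "rcl t = rcl s"
  shows "p_variant (res t) (res s)"
proof -
  have st: "is_step s" "is_step t"
    using S by (auto simp: scheduling_rule_def)
  have "lowering t s" "lowering s t"
    using lowering_same_source st eq(1,2) by metis+
  then have "cong_lowering t s"
    using S unfolding scheduling_rule_def deterministic_def by blast
  then obtain \<rho> where "shifting \<rho>"
    and \<rho>K: "pshift \<rho> (src s - {sel (src s)}) = src s - {sel (src s)}"
    and \<rho>C: "pshift \<rho> (pshift (shf s) (snd (cls s))) = pshift (shf t) (snd (cls s))"
    using cong_lowering_same_source eq(1) by blast
  define B where "B = snd (rcl s)"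
  define U where "U = (src s - {sel (src s)}) \<union> pshift (shf s) B"
  have "pshift \<rho> (pshift (shf s) B) = pshift (shf t) B"
    using arg_cong[OF \<rho>C, of "psubst (ren s)"]
    by (simp add: B_def rcl_def csubst_def psubst_pshift)
  with \<rho>K have \<rho>U: "pshift \<rho> U = (src s - {sel (src s)}) \<union> pshift (shf t) B"
    by (simp add: U_def pshift_Un)
  have "finite U"
    using is_stepD(1,2)[OF st(1)]
    by (simp add: U_def B_def rcl_def csubst_def is_pgoal_def is_clause_def
        psubst_def pshift_def)
  then obtain g where "permutation g" and g: "\<forall>x\<in>pvars U. umgu t x = tsubst (Var \<circ> g) (umgu s x)"
    using idem_rel_mgu_unique_up_to_renaming is_stepD(7)[OF st(1)] is_stepD(7)[OF st(2)] eq
    by (metis finite_pvars)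
  have "res t = psubst (umgu t) (pshift \<rho> U)"
    using eq by (simp add: res_def \<rho>U B_def)
  also have "\<dots> = pshift \<rho> (psubst (scomp (umgu s) (Var \<circ> g)) U)"
    using g by (auto simp: psubst_pshift scomp_def intro!: arg_cong[where f = "pshift \<rho>"] psubst_cong)
  also have "\<dots> = pshift \<rho> (psubst (Var \<circ> g) (res s))"
    by (simp add: res_def U_def B_def psubst_psubst)
  finally show ?thesis
    using \<open>shifting \<rho>\<close> \<open>permutation g\<close> by (auto simp: p_variant_iff_permutation)
qed

lemma res_same_source_same_clause:
  assumes S: "scheduling_rule S" "s \<in> S" "t \<in> S" and eq: "src t = src s" "cls t = cls s"
  shows "p_variant (res t) (res s)"
proof -
  have st: "is_step s" "is_step t"
    using S by (auto simp: scheduling_rule_def)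
  obtain \<mu> where "permutation \<mu>" and \<mu>: "\<forall>x\<in>pvars (src s). \<mu> x = x"
    and rcl: "csubst (Var \<circ> \<mu>) (rcl s) = rcl t"
    using renamed_clauses_differ_by_permutation[of "ren s" "ren t" "cls s" "pvars (src s)"]
      is_stepD(1,2,3,6)[OF st(1)] is_stepD(3,6)[OF st(2)] eq
    by (metis finite_pvars is_pgoal_def rcl_def inf_commute)
  define s' where "s' = variant_step \<mu> id s"
  have "s' \<in> S"
    using S \<open>permutation \<mu>\<close> by (simp add: s'_def variant_step_in_scheduling_rule)
  moreover have "src s' = src s"
    using \<mu> by (simp add: s'_def psubst_cong)
  ultimately have "p_variant (res t) (res s')"
    using res_same_source_same_renamed_clause[OF S(1) \<open>s' \<in> S\<close> S(3)] eq rcl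
    by (simp add: s'_def rcl_variant_step)
  moreover have "p_variant (res s') (res s)"
    using p_variant_res_variant_step[OF st(1) \<open>permutation \<mu>\<close> shifting_id] by (simp add: s'_def)
  ultimately show ?thesis
    by (rule p_variant_trans)
qed

lemma final_p_variant_same_template:
  assumes "scheduling_rule S"
  shows "chain G ds \<Longrightarrow> set ds \<subseteq> S \<Longrightarrow> chain G' ds' \<Longrightarrow> set ds' \<subseteq> S
    \<Longrightarrow> map cls ds' = map cls ds \<Longrightarrow> p_variant G' G \<Longrightarrow> p_variant (final G' ds') (final G ds)"
proof (induction ds arbitrary: G G' ds')
  case Nil
  then show ?case
    by simp
next
  case (Cons s ds)
  then obtain s' ds'' where ds': "ds' = s' # ds''" "cls s' = cls s" "map cls ds'' = map cls ds"
    by (cases ds') auto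
  have "s \<in> S" "src s = G" "s' \<in> S" "src s' = G'"
    using Cons.prems(1-4) ds'(1) by auto
  then obtain t where t: "t \<in> S" "src t = G" "cls t = cls s'" "p_variant (res s') (res t)"
    using step_from_p_variant_source[OF assms _ _ finite.emptyI] Cons.prems(6) by metis
  have "p_variant (res t) (res s)"
    using res_same_source_same_clause[OF assms \<open>s \<in> S\<close> t(1)] t(2,3) ds'(2)
      \<open>src s = G\<close> by simp
  with t(4) have "p_variant (res s') (res s)"
    by (rule p_variant_trans)
  moreover have "chain (res s) ds" "set ds \<subseteq> S" "chain (res s') ds''" "set ds'' \<subseteq> S"
    using Cons.prems(1-4) ds'(1) by auto
  ultimately have "p_variant (final (res s') ds'') (final (res s) ds)"
    using Cons.IH ds'(3) by blast
  then show ?case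
    using ds'(1) by simp
qed

fun fresh_steps :: "nat set \<Rightarrow> ('p,'f) step list \<Rightarrow> bool" where
  "fresh_steps F [] = True"
| "fresh_steps F (s # ds) \<longleftrightarrow> cvars (rcl s) \<inter> F = {} \<and> fresh_steps (F \<union> cvars (rcl s)) ds"

lemma fresh_steps_nth:
  "fresh_steps F ds \<Longrightarrow> j < length ds \<Longrightarrow>
    cvars (rcl (ds ! j)) \<inter> (F \<union> (\<Union>i<j. cvars (rcl (ds ! i)))) = {}"
proof (induction ds arbitrary: F j)
  case (Cons s ds)
  then show ?case
  proof (cases j)
    case (Suc j')
    have "(\<Union>i<Suc j'. cvars (rcl ((s # ds) ! i))) = cvars (rcl s) \<union> (\<Union>i<j'. cvars (rcl (ds ! i)))"
      by (auto simp: less_Suc_eq_0_disj)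
    with Cons.IH[of "F \<union> cvars (rcl s)" j'] Cons.prems Suc show ?thesis
      by (simp add: Un_assoc)
  qed simp
qed simp

lemma fresh_steps_nvar: "fresh_steps F ds \<Longrightarrow> nvar ds \<inter> F = {}"
  by (induction ds arbitrary: F) (auto simp: nvar_def)

lemma psld_if_fresh_steps: "chain G ds \<Longrightarrow> fresh_steps F ds \<Longrightarrow> pvars G \<subseteq> F \<Longrightarrow> psld G ds"
  unfolding psld_def using fresh_steps_nth by blast

lemma fresh_chain_from_p_variant:
  assumes "scheduling_rule S"
  shows "chain G' ds' \<Longrightarrow> set ds' \<subseteq> S \<Longrightarrow> p_variant G' G \<Longrightarrow> finite F
    \<Longrightarrow> \<exists>ds. chain G ds \<and> set ds \<subseteq> S \<and> map cls ds = map cls ds' \<and> fresh_steps F ds"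
proof (induction ds' arbitrary: G G' F)
  case Nil
  show ?case
    by (rule exI[of _ "[]"]) simp
next
  case (Cons s' ds')
  have "s' \<in> S" "src s' = G'"
    using Cons.prems(1,2) by auto
  then obtain t where t: "t \<in> S" "src t = G" "cls t = cls s'" "cvars (rcl t) \<inter> F = {}"
    "p_variant (res s') (res t)"
    using step_from_p_variant_source[OF assms] Cons.prems(3,4) by metis
  have "is_step t"
    using t(1) assms by (simp add: scheduling_rule_def)
  then have fin: "finite (F \<union> cvars (rcl t))"
    using Cons.prems(4) finite_cvars_rcl by simp
  have "chain (res s') ds'" "set ds' \<subseteq> S"
    using Cons.prems(1,2) by auto
  then obtain ds where "chain (res t) ds" "set ds \<subseteq> S" "map cls ds = map cls ds'"
    "fresh_steps (F \<union> cvars (rcl t)) ds"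
    using Cons.IH[OF _ _ t(5) fin] by blast
  with t assms show ?case
    by (intro exI[of _ "t # ds"]) (auto simp: scheduling_rule_def)
qed

theorem lemmaL3p2p2:
  fixes S :: "('p,'f) step set" and V :: "nat set" and G G' :: "('p,'f) pgoal"
  assumes "scheduling_rule S" and "finite V" and "is_pgoal G" and "p_variant G' G"
  shows "(\<forall>D Q R. deriv_via S G D Q \<and> deriv_via S G' D R \<longrightarrow> p_variant R Q)
       \<and> (\<forall>D. (\<exists>R. deriv_via S G' D R) \<longrightarrow>
            (\<exists>Dr. psld G Dr \<and> set Dr \<subseteq> S \<and> template Dr = D \<and> nvar Dr \<inter> V = {}))"
proof (intro conjI allI impI)
  fix D Q R
  assume "deriv_via S G D Q \<and> deriv_via S G' D R"
  then obtain ds ds' where "chain G ds" "set ds \<subseteq> S" "map cls ds = D" "final G ds = Q"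
    "chain G' ds'" "set ds' \<subseteq> S" "map cls ds' = D" "final G' ds' = R"
    by (auto simp: deriv_via_def psld_def template_def)
  then show "p_variant R Q"
    using final_p_variant_same_template[OF assms(1)] assms(4) by metis
next
  fix D
  assume "\<exists>R. deriv_via S G' D R"
  then obtain ds' where "chain G' ds'" "set ds' \<subseteq> S" "map cls ds' = D"
    by (auto simp: deriv_via_def psld_def template_def)
  moreover have "finite (pvars G \<union> V)"
    using assms(2,3) by (simp add: is_pgoal_def finite_pvars)
  ultimately obtain ds where "chain G ds" "set ds \<subseteq> S" "map cls ds = D"
    and fresh: "fresh_steps (pvars G \<union> V) ds"
    using fresh_chain_from_p_variant[OF assms(1)] assms(4) by metis
  moreover have "psld G ds"
    using psld_if_fresh_steps[OF \<open>chain G ds\<close> fresh] by blast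
  moreover have "nvar ds \<inter> V = {}"
    using fresh_steps_nvar[OF fresh] by blast
  ultimately show "\<exists>Dr. psld G Dr \<and> set Dr \<subseteq> S \<and> template Dr = D \<and> nvar Dr \<inter> V = {}"
    by (auto simp: template_def)
qed

end
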